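(* Let $k \in \mathbb{N}$. For every $n \in \mathbb{N}$ and all integers $h, t$ with $0 \le h \le k-1$ and $1 \le t \le F_n$: (i) $a_{k(F_{n+1}-1)+hF_n+t+1} = kF_{n+2} - k + 1 + hF_{n+1} + \lfloor (F_{n+1}+1+t)\varphi \rfloor - \lfloor (F_{n+1}+1)\varphi \rfloor$; (ii) $b_{k(F_{n+1}-1)+hF_n+t+1} = kF_{n+3} + hF_{n+2} - k + t + 2 + \lfloor (F_{n+1}+1+t)\varphi \rfloor - \lfloor (F_{n+1}+1)\varphi \rfloor$, where $\varphi = \frac{1+\sqrt{5}}{2}$.
   Context: Fibonacci numbers: $F_1 = F_2 = 1$, $F_{i+2} = F_{i+1} + F_i$. Let $\sigma$ be the substitution on finite sequences over $\{1,2\}$ replacing each entry $1$ by $2$ and each entry $2$ by $2,1$. Let $C_{1,1} = (1)$, $C_{i+1,1} = \sigma(C_{i,1})$. For fixed $k \in \mathbb{N}$ and $i \in \mathbb{N}$, let $C_i^{(k)}$ be the concatenation of $k$ copies of $C_{i,1}$. Let $(c_n)_{n \in \mathbb{N}}$ be the infinite sequence obtained by concatenating $C_1^{(k)}, C_2^{(k)}, C_3^{(k)}, \dots$ in order, and let $d_n = c_n + 1$. Define $a_1 = k+1$, $a_n = k+1 + \sum_{i=1}^{n-1} c_i$, and $b_1 = 2k+2$, $b_n = 2k+2 + \sum_{i=1}^{n-1} d_i$ for $n \in \mathbb{N}$. *)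

theory Defs
  imports Complex_Main "HOL-Number_Theory.Fib"
begin

(* Fibonacci numbers: library fib, fib 1 = fib 2 = 1, fib (n+2) = fib (n+1) + fib n. *)

definition sigma :: "nat list \<Rightarrow> nat list" where
  "sigma xs = concat (map (\<lambda>x. if x = 1 then [2] else [2, 1]) xs)"

(* C i = C_{i,1}, for i \<ge> 1 *)
fun Cw :: "nat \<Rightarrow> nat list" where
  "Cw 0 = [1]"
| "Cw (Suc 0) = [1]"
| "Cw (Suc (Suc i)) = sigma (Cw (Suc i))"

definition Ck :: "nat \<Rightarrow> nat \<Rightarrow> nat list" where
  "Ck k i = concat (replicate k (Cw i))"

definition cprefix :: "nat \<Rightarrow> nat \<Rightarrow> nat list" where
  "cprefix k m = concat (map (Ck k) [1..<Suc m])"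

(* c_n (1-indexed); for k \<ge> 1 the prefix of n blocks has length \<ge> n *)
definition cseq :: "nat \<Rightarrow> nat \<Rightarrow> nat" where
  "cseq k n = cprefix k n ! (n - 1)"

definition dseq :: "nat \<Rightarrow> nat \<Rightarrow> nat" where
  "dseq k n = cseq k n + 1"

definition aseq :: "nat \<Rightarrow> nat \<Rightarrow> int" where
  "aseq k n = int (k + 1) + (\<Sum>i = 1..<n. int (cseq k i))"

definition bseq :: "nat \<Rightarrow> nat \<Rightarrow> int" where
  "bseq k n = int (2 * k + 2) + (\<Sum>i = 1..<n. int (dseq k i))"

definition phi :: real where
  "phi = (1 + sqrt 5) / 2"

end

theory Submission
  imports Defs "HOL-Computational_Algebra.Nth_Powers"
begin

(* The words C_{i,1} are gap sequences of the Beatty sequence beatty p = floor (p phi):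
   C_{n+2,1} lists the gaps beatty (p + 1) - beatty p for p = 1, ..., F_{n+2}.  The reason is
   that, since 1 / phi = phi - 1, a gap equals 2 exactly at the positions p that are themselves
   values of beatty, so sigma applied to the gap at p yields precisely the gaps between beatty p
   and beatty (p + 1).  As C_{n+2,1} = C_{n+1,1} C_{n,1}, the partial sums of C_{n,1} are
   differences of beatty starting at F_{n+1} + 1.  The index in the theorem lies t entries into
   the (h+1)-st copy of C_{n,1} inside C_n^(k), and the blocks C_i^(k) have length k F_i and
   sum k F_{i+1}, which accounts for the remaining terms. *)

lemma phi_bounds: "3 / 2 < phi" "phi < 2"
proof -
  have "2 < sqrt 5" by (rule real_less_rsqrt) simp
  moreover have "sqrt 5 < 3" by (rule real_sqrt_less_mono[of 5 9, simplified])
  ultimately show "3 / 2 < phi" "phi < 2" unfolding phi_def by simp_all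
qed

lemma phi_mult_phi_minus_1: "phi * (phi - 1) = 1"
  unfolding phi_def by (simp add: field_simps)

lemma five_times_square_not_square:
  fixes p q :: nat
  assumes "q ^ 2 = 5 * p ^ 2"
  shows "p = 0"
proof (rule ccontr)
  assume "p \<noteq> 0"
  have "is_nth_power 2 (5 * p ^ 2)" using assms by (metis is_nth_power_nth_power)
  with \<open>p \<noteq> 0\<close> have "is_nth_power 2 (5 ^ 1 :: nat)"
    by (simp add: is_nth_power_mult_cancel_right)
  then show False using is_nth_power_prime_power_nat_iff[of 5 2 1] by simp
qed

lemma of_nat_mult_phi_not_Ints:
  assumes "p > 0"
  shows "real p * phi \<notin> \<int>"
proof
  assume "real p * phi \<in> \<int>"
  then obtain z where z: "real p * phi = of_int z" by (elim Ints_cases)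
  define q where "q = nat (2 * z - int p)"
  have "real p \<le> real p * phi" using mult_left_mono[of 1 phi "real p"] phi_bounds by simp
  then have "real q = real p * sqrt 5"
    using z unfolding q_def phi_def by (simp add: field_simps)
  then have "real (q ^ 2) = real (5 * p ^ 2)" by (simp add: power_mult_distrib)
  then have "q ^ 2 = 5 * p ^ 2" by (simp only: of_nat_eq_iff)
  from five_times_square_not_square[OF this] assms show False by simp
qed

definition beatty :: "nat \<Rightarrow> int" where
  "beatty p = \<lfloor>real p * phi\<rfloor>"

definition beatty_gap :: "nat \<Rightarrow> nat" where
  "beatty_gap p = nat (beatty (Suc p) - beatty p)"

lemma beatty_Suc_diff: "beatty (Suc p) - beatty p \<in> {1, 2}"
proof -
  have "beatty (Suc p) = \<lfloor>real p * phi + phi\<rfloor>"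
    unfolding beatty_def by (simp add: distrib_right add.commute)
  moreover have "\<lfloor>real p * phi\<rfloor> + 1 \<le> \<lfloor>real p * phi + phi\<rfloor>"
    "\<lfloor>real p * phi + phi\<rfloor> \<le> \<lfloor>real p * phi\<rfloor> + 2"
    using phi_bounds by linarith+
  ultimately show ?thesis unfolding beatty_def by auto
qed

lemma of_nat_beatty_gap: "int (beatty_gap p) = beatty (Suc p) - beatty p"
  using beatty_Suc_diff[of p] unfolding beatty_gap_def by auto

lemma beatty_gap_cases: "beatty_gap p = 1 \<or> beatty_gap p = 2"
  using beatty_Suc_diff[of p] unfolding beatty_gap_def by auto

lemma strict_mono_beatty: "strict_mono beatty"
proof (rule strict_mono_Suc_iff[THEN iffD2], rule allI)
  show "beatty p < beatty (Suc p)" for p using beatty_Suc_diff[of p] by auto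
qed

lemma beatty_Suc_0 [simp]: "beatty (Suc 0) = 1"
  unfolding beatty_def using phi_bounds by (simp add: floor_eq_iff)

lemma one_le_beatty: "p \<ge> 1 \<Longrightarrow> 1 \<le> beatty p"
  using strict_mono_less_eq[OF strict_mono_beatty, of 1 p] by simp

lemma beatty_gap_1: "beatty_gap 1 = 2"
proof -
  have "beatty 2 = 3" unfolding beatty_def using phi_bounds by (simp add: floor_eq_iff)
  then show ?thesis unfolding beatty_gap_def by (simp add: numeral_2_eq_2)
qed

lemma sum_list_beatty_gap_upt:
  "a \<le> b \<Longrightarrow> int (sum_list (map beatty_gap [a..<b])) = beatty b - beatty a"
  by (induction b) (auto simp: le_Suc_eq of_nat_beatty_gap)

lemma floor_mult_phi_minus_1: "\<lfloor>real q * (phi - 1)\<rfloor> = beatty q - int q"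
proof -
  have "real q * (phi - 1) = real q * phi - of_int (int q)" by (simp add: algebra_simps)
  then show ?thesis unfolding beatty_def by (simp only: floor_diff_of_int)
qed

lemma exists_nat_between_iff_floor_less:
  fixes a b :: real
  assumes "0 \<le> a" "b \<notin> \<int>"
  shows "(\<exists>m::nat. a < m \<and> m < b) \<longleftrightarrow> \<lfloor>a\<rfloor> < \<lfloor>b\<rfloor>"
proof
  assume "\<exists>m::nat. a < m \<and> m < b"
  then obtain m :: nat where "a < m" "m < b" by blast
  then have "\<lfloor>a\<rfloor> < int m" "int m \<le> \<lfloor>b\<rfloor>"
    by (simp_all add: floor_less_iff le_floor_iff)
  then show "\<lfloor>a\<rfloor> < \<lfloor>b\<rfloor>" by linarith
next
  assume less: "\<lfloor>a\<rfloor> < \<lfloor>b\<rfloor>"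
  have "0 \<le> \<lfloor>b\<rfloor>" using less assms(1) by linarith
  then have m: "real (nat \<lfloor>b\<rfloor>) = of_int \<lfloor>b\<rfloor>" by simp
  have "a < real (nat \<lfloor>b\<rfloor>)" unfolding m using less by (simp add: floor_less_iff)
  moreover have "real (nat \<lfloor>b\<rfloor>) < b"
    unfolding m using assms(2) by (metis Ints_of_int of_int_floor_le order_le_neq_trans)
  ultimately show "\<exists>m::nat. a < m \<and> m < b" by blast
qed

(* beatty m = p means that m lies strictly between p (phi - 1) and (p + 1) (phi - 1),
   and the floors of these two bounds differ by beatty_gap p - 1. *)
lemma beatty_gap_eq_2_iff:
  assumes "p \<ge> 1"
  shows "beatty_gap p = 2 \<longleftrightarrow> int p \<in> range beatty"
proof -
  define a where "a = real p * (phi - 1)"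
  define b where "b = real (Suc p) * (phi - 1)"
  have "0 < phi" using phi_bounds by simp
  have "a * phi = real p" "b * phi = real (Suc p)"
    unfolding a_def b_def using phi_mult_phi_minus_1 by (simp_all add: ac_simps)
  then have a_less_iff: "a < real m \<longleftrightarrow> real p < real m * phi"
    and less_b_iff: "real m < b \<longleftrightarrow> real m * phi < real (Suc p)" for m
    using mult_less_cancel_right_pos[OF \<open>0 < phi\<close>] by metis+
  have "int p \<in> range beatty \<longleftrightarrow> (\<exists>m. real p \<le> real m * phi \<and> real m * phi < real (Suc p))"
  proof -
    have "int p = beatty m \<longleftrightarrow> real p \<le> real m * phi \<and> real m * phi < real (Suc p)" for m
      unfolding beatty_def eq_commute[of "int p"] floor_eq_iff by (simp add: add.commute)
    then show ?thesis by (simp add: image_iff)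
  qed
  also have "\<dots> \<longleftrightarrow> (\<exists>m::nat. a < m \<and> m < b)"
  proof -
    have ne: "real p \<noteq> real m * phi" for m
      using of_nat_mult_phi_not_Ints[of m] assms by (cases "m = 0") (auto dest: sym simp: Ints_of_nat)
    show ?thesis unfolding a_less_iff less_b_iff by (meson ne order_le_less)
  qed
  also have "\<dots> \<longleftrightarrow> \<lfloor>a\<rfloor> < \<lfloor>b\<rfloor>"
  proof (rule exists_nat_between_iff_floor_less)
    show "0 \<le> a" unfolding a_def using phi_bounds by simp
    show "b \<notin> \<int>"
    proof
      assume "b \<in> \<int>"
      moreover have "real (Suc p) * phi = b + real (Suc p)" unfolding b_def by (simp add: algebra_simps)
      ultimately have "real (Suc p) * phi \<in> \<int>" by (simp only: Ints_add Ints_of_nat)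
      then show False using of_nat_mult_phi_not_Ints[of "Suc p"] by simp
    qed
  qed
  also have "\<dots> \<longleftrightarrow> beatty_gap p = 2"
  proof -
    have "\<lfloor>a\<rfloor> = beatty p - int p" "\<lfloor>b\<rfloor> = beatty (Suc p) - int (Suc p)"
      unfolding a_def b_def by (rule floor_mult_phi_minus_1)+
    then show ?thesis using beatty_gap_cases[of p] of_nat_beatty_gap[of p] by auto
  qed
  finally show ?thesis ..
qed

lemma sigma_Nil [simp]: "sigma [] = []"
  unfolding sigma_def by simp

lemma sigma_append: "sigma (xs @ ys) = sigma xs @ sigma ys"
  unfolding sigma_def by simp

lemma sigma_beatty_gap:
  assumes "p \<ge> 1"
  shows "sigma [beatty_gap p] = map beatty_gap [nat (beatty p)..<nat (beatty (Suc p))]"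
proof -
  define q where "q = nat (beatty p)"
  have "1 \<le> beatty p" using assms by (rule one_le_beatty)
  then have q: "beatty p = int q" "q \<ge> 1" unfolding q_def by simp_all
  then have gap_q: "beatty_gap q = 2" using beatty_gap_eq_2_iff by (metis rangeI)
  show ?thesis
  proof (cases "beatty_gap p = 1")
    case True
    then have "nat (beatty (Suc p)) = Suc q" using of_nat_beatty_gap[of p] q by simp
    then show ?thesis using True gap_q by (simp add: sigma_def flip: q_def)
  next
    case False
    then have gap_p: "beatty_gap p = 2" using beatty_gap_cases by blast
    then have Suc_p: "beatty (Suc p) = int q + 2" using of_nat_beatty_gap[of p] q by simp
    have "int (Suc q) \<notin> range beatty"
    proof
      assume "int (Suc q) \<in> range beatty"
      then obtain m where "beatty m = int q + 1" by (auto simp: add.commute)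
      then have "beatty p < beatty m" "beatty m < beatty (Suc p)" using q Suc_p by simp_all
      then have "p < m" "m < Suc p" using strict_mono_beatty by (simp_all add: strict_mono_less)
      then show False by simp
    qed
    then have "beatty_gap (Suc q) = 1"
      using beatty_gap_eq_2_iff[of "Suc q"] beatty_gap_cases[of "Suc q"] by auto
    moreover have "nat (beatty (Suc p)) = Suc (Suc q)" using Suc_p by simp
    ultimately show ?thesis using gap_p gap_q by (simp add: sigma_def flip: q_def)
  qed
qed

lemma sigma_map_beatty_gap:
  "sigma (map beatty_gap [1..<Suc N]) = map beatty_gap [1..<nat (beatty (Suc N))]"
proof (induction N)
  case 0
  then show ?case by simp
next
  case (Suc N)
  have "1 \<le> nat (beatty (Suc N))" "nat (beatty (Suc N)) \<le> nat (beatty (Suc (Suc N)))"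
    using one_le_beatty[of "Suc N"] strict_mono_less_eq[OF strict_mono_beatty, of "Suc N" "Suc (Suc N)"]
    by simp_all
  then have "[1..<nat (beatty (Suc (Suc N)))] =
      [1..<nat (beatty (Suc N))] @ [nat (beatty (Suc N))..<nat (beatty (Suc (Suc N)))]"
    using upt_add_eq_append le_add_diff_inverse by metis
  then show ?case using Suc.IH sigma_beatty_gap[of "Suc N"] by (simp add: sigma_append)
qed

lemma Cw_Suc: "n \<ge> 1 \<Longrightarrow> Cw (Suc n) = sigma (Cw n)"
  by (cases n) simp_all

declare Cw.simps(3) [simp del]

lemma Cw_Suc_Suc_eq_append: "n \<ge> 1 \<Longrightarrow> Cw (Suc (Suc n)) = Cw (Suc n) @ Cw n"
proof (induction n rule: nat_induct_at_least)
  case base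
  then show ?case by (simp add: Cw_Suc sigma_def)
next
  case (Suc n)
  have "Cw (Suc (Suc (Suc n))) = sigma (Cw (Suc n) @ Cw n)"
    using Suc.IH by (simp only: Cw_Suc Suc.hyps le_SucI)
  also have "\<dots> = Cw (Suc (Suc n)) @ Cw (Suc n)"
    using Suc.hyps by (simp only: sigma_append Cw_Suc le_SucI)
  finally show ?case .
qed

lemma length_Cw: "n \<ge> 1 \<Longrightarrow> length (Cw n) = fib n"
proof (induction n rule: fib.induct)
  case (3 n)
  show ?case
  proof (cases "n = 0")
    case True
    then show ?thesis by (simp add: Cw.simps sigma_def)
  next
    case False
    then show ?thesis using 3 by (simp add: Cw_Suc_Suc_eq_append)
  qed
qed simp_all

lemma sum_list_Cw: "n \<ge> 1 \<Longrightarrow> sum_list (Cw n) = fib (Suc n)"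
proof (induction n rule: fib.induct)
  case (3 n)
  show ?case
  proof (cases "n = 0")
    case True
    then show ?thesis by (simp add: Cw.simps sigma_def)
  next
    case False
    then show ?thesis using 3 by (simp add: Cw_Suc_Suc_eq_append)
  qed
qed simp_all

lemma Cw_eq_map_beatty_gap: "Cw (Suc (Suc n)) = map beatty_gap [1..<Suc (fib (Suc (Suc n)))]"
proof (induction n)
  case 0
  then show ?case using beatty_gap_1 by (simp add: Cw_Suc sigma_def)
next
  case (Suc n)
  define X where "X = nat (beatty (Suc (fib (Suc (Suc n)))))"
  have Cw: "Cw (Suc (Suc (Suc n))) = map beatty_gap [1..<X]"
    unfolding X_def by (simp only: Cw_Suc[of "Suc (Suc n)"] Suc.IH sigma_map_beatty_gap le_add1 plus_1_eq_Suc)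
  have "X - 1 = fib (Suc (Suc (Suc n)))"
    using length_Cw[of "Suc (Suc (Suc n))"] unfolding Cw by simp
  then have "X = Suc (fib (Suc (Suc (Suc n))))"
    using fib_neq_0_nat[of "Suc (Suc (Suc n))"] by linarith
  with Cw show ?case by (simp only:)
qed

lemma beatty_diff_eq_sum_list_take_Cw:
  assumes "n \<ge> 1" "t \<le> fib n"
  shows "beatty (fib (n + 1) + 1 + t) - beatty (fib (n + 1) + 1) = int (sum_list (take t (Cw n)))"
proof -
  have "Cw n = drop (fib (n + 1)) (Cw (Suc (Suc n)))"
    using assms(1) by (simp add: Cw_Suc_Suc_eq_append length_Cw)
  also have "\<dots> = map beatty_gap [fib (n + 1) + 1..<Suc (fib (n + 2))]"
    by (simp add: Cw_eq_map_beatty_gap drop_map del: fib.simps)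
  finally have "take t (Cw n) = map beatty_gap (take t [fib (n + 1) + 1..<Suc (fib (n + 2))])"
    by (simp only: take_map)
  also have "\<dots> = map beatty_gap [fib (n + 1) + 1..<fib (n + 1) + 1 + t]"
  proof -
    have "fib (n + 1) + 1 + t \<le> Suc (fib (n + 2))" using assms(2) fib_plus_2[of n] by simp
    then show ?thesis by (simp only: take_upt)
  qed
  finally show ?thesis by (simp only: sum_list_beatty_gap_upt le_add1)
qed

lemma cprefix_0 [simp]: "cprefix k 0 = []"
  unfolding cprefix_def by simp

lemma cprefix_Suc: "cprefix k (Suc j) = cprefix k j @ Ck k (Suc j)"
  unfolding cprefix_def by simp

lemma cprefix_eq_append: "i \<le> j \<Longrightarrow> cprefix k j = cprefix k i @ concat (map (Ck k) [Suc i..<Suc j])"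
  unfolding cprefix_def using upt_add_eq_append[of 1 "Suc i" "j - i"] by simp

lemma sum_list_concat: "sum_list (concat xss) = sum_list (map sum_list xss)"
  by (induction xss) simp_all

lemma length_Ck: "i \<ge> 1 \<Longrightarrow> length (Ck k i) = k * fib i"
  unfolding Ck_def by (simp add: length_concat length_Cw sum_list_replicate)

lemma sum_list_Ck: "i \<ge> 1 \<Longrightarrow> sum_list (Ck k i) = k * fib (Suc i)"
  unfolding Ck_def by (simp add: sum_list_concat sum_list_Cw sum_list_replicate)

lemma length_cprefix: "length (cprefix k j) + k = k * fib (j + 2)"
  by (induction j) (simp_all add: cprefix_Suc length_Ck algebra_simps)

lemma sum_list_cprefix: "sum_list (cprefix k j) + 2 * k = k * fib (j + 3)"
  by (induction j) (simp_all add: cprefix_Suc sum_list_Ck algebra_simps numeral_3_eq_3)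

lemma length_cprefix_ge: "k \<ge> 1 \<Longrightarrow> j \<le> length (cprefix k j)"
proof (induction j)
  case (Suc j)
  have "length (cprefix k (Suc j)) = length (cprefix k j) + k * fib (Suc j)"
    by (simp add: cprefix_Suc length_Ck)
  moreover have "1 \<le> fib (Suc j)" "fib (Suc j) \<le> k * fib (Suc j)"
    using Suc.prems fib_neq_0_nat[of "Suc j"] by simp_all
  ultimately show ?case using Suc by linarith
qed simp

lemma cseq_eq_nth_cprefix:
  assumes "k \<ge> 1" "1 \<le> i" "i \<le> length (cprefix k N)"
  shows "cseq k i = cprefix k N ! (i - 1)"
proof (cases "i \<le> N")
  case True
  have "i - 1 < length (cprefix k i)" using length_cprefix_ge[OF assms(1), of i] assms(2) by linarith
  then show ?thesis unfolding cseq_def using cprefix_eq_append[OF True] by (simp add: nth_append)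
next
  case False
  have "i - 1 < length (cprefix k N)" using assms(2,3) by linarith
  then show ?thesis unfolding cseq_def using cprefix_eq_append[of N i k] False by (simp add: nth_append)
qed

lemma aseq_Suc_eq_sum_list_take:
  assumes "k \<ge> 1" "M \<le> length (cprefix k N)"
  shows "aseq k (Suc M) = int (k + 1) + int (sum_list (take M (cprefix k N)))"
proof -
  have "(\<Sum>i = 1..<Suc M. cseq k i) = (\<Sum>i = 0..<M. cseq k (Suc i))"
    by (simp only: sum.shift_bounds_Suc_ivl One_nat_def)
  also have "\<dots> = (\<Sum>i = 0..<M. take M (cprefix k N) ! i)"
  proof (rule sum.cong)
    fix i assume "i \<in> {0..<M}"
    then show "cseq k (Suc i) = take M (cprefix k N) ! i"
      using cseq_eq_nth_cprefix[OF assms(1), of "Suc i" N] assms(2) by simp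
  qed simp
  also have "\<dots> = sum_list (take M (cprefix k N))"
    using assms(2) by (simp add: sum_list_sum_nth)
  finally show ?thesis unfolding aseq_def by (simp flip: of_nat_sum)
qed

lemma bseq_eq_aseq: "bseq k (Suc M) = aseq k (Suc M) + int (k + 1 + M)"
  unfolding bseq_def aseq_def dseq_def by (simp add: sum.distrib)

lemma take_cprefix_Suc:
  assumes "h < k" "t \<le> fib (j + 1)"
  shows "take (length (cprefix k j) + h * fib (j + 1) + t) (cprefix k (j + 1)) =
    cprefix k j @ concat (replicate h (Cw (j + 1))) @ take t (Cw (j + 1))"
proof -
  have "replicate k (Cw (j + 1)) =
      replicate h (Cw (j + 1)) @ Cw (j + 1) # replicate (k - h - 1) (Cw (j + 1))"
    using assms(1) by (simp flip: replicate_add replicate_Suc)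
  moreover have "length (concat (replicate h (Cw (j + 1)))) = h * fib (j + 1)"
    by (simp add: length_concat sum_list_replicate length_Cw)
  ultimately show ?thesis
    using assms(2) by (simp add: cprefix_Suc Ck_def length_Cw)
qed

lemma aseq_inside_Ck:
  assumes "k \<ge> 1" "h < k" "t \<le> fib (j + 1)"
  shows "aseq k (Suc (length (cprefix k j) + h * fib (j + 1) + t)) =
    int (k + 1) + int (sum_list (cprefix k j)) + int (h * fib (j + 2))
    + int (sum_list (take t (Cw (j + 1))))"
proof -
  let ?M = "length (cprefix k j) + h * fib (j + 1) + t"
  note take = take_cprefix_Suc[OF assms(2,3)]
  have "?M \<le> length (cprefix k (j + 1))"
    using arg_cong[OF take, of length] assms(3)
    by (simp add: length_concat sum_list_replicate length_Cw)
  then have "aseq k (Suc ?M) = int (k + 1) + int (sum_list (take ?M (cprefix k (j + 1))))"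
    by (rule aseq_Suc_eq_sum_list_take[OF assms(1)])
  then show ?thesis
    unfolding take by (simp add: sum_list_concat sum_list_replicate sum_list_Cw numeral_2_eq_2)
qed

theorem theorem5p1:
  fixes k n h t :: nat
  assumes "k \<ge> 1" and "n \<ge> 1" and "h \<le> k - 1" and "1 \<le> t" and "t \<le> fib n"
  shows "(aseq k (k * (fib (n + 1) - 1) + h * fib n + t + 1) =
           int (k * fib (n + 2)) - int k + 1 + int (h * fib (n + 1))
           + \<lfloor>real (fib (n + 1) + 1 + t) * phi\<rfloor> - \<lfloor>real (fib (n + 1) + 1) * phi\<rfloor>) \<and>
         (bseq k (k * (fib (n + 1) - 1) + h * fib n + t + 1) =
           int (k * fib (n + 3)) + int (h * fib (n + 2)) - int k + int t + 2
           + \<lfloor>real (fib (n + 1) + 1 + t) * phi\<rfloor> - \<lfloor>real (fib (n + 1) + 1) * phi\<rfloor>)"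
proof -
  obtain j where n: "j + 1 = n" using assms(2) by (cases n) auto
  define M where "M = length (cprefix k j) + h * fib n + t"
  define D where "D = sum_list (take t (Cw n))"
  have h: "h < k" using assms(1,3) by linarith
  have "j + 2 = n + 1" "j + 3 = n + 2" using n by simp_all
  then have L: "length (cprefix k j) + k = k * fib (n + 1)"
    and S: "sum_list (cprefix k j) + 2 * k = k * fib (n + 2)"
    and A: "aseq k (Suc M) = int (k + 1) + int (sum_list (cprefix k j)) + int (h * fib (n + 1)) + int D"
    using length_cprefix[of k j] sum_list_cprefix[of k j] aseq_inside_Ck[OF assms(1) h, of t j] assms(5)
    unfolding M_def D_def n by (simp_all only:)
  have idx: "k * (fib (n + 1) - 1) + h * fib n + t + 1 = Suc M"
    unfolding M_def using L by (simp add: diff_mult_distrib2)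
  have a: "aseq k (Suc M) = int (k * fib (n + 2)) - int k + 1 + int (h * fib (n + 1)) + int D"
    using A S by linarith
  have "k * fib (n + 3) = k * fib (n + 2) + k * fib (n + 1)"
    "h * fib (n + 2) = h * fib (n + 1) + h * fib n"
    by (simp_all add: numeral_3_eq_3 numeral_2_eq_2 algebra_simps)
  then have "bseq k (Suc M) = int (k * fib (n + 3)) + int (h * fib (n + 2)) - int k + int t + 2 + int D"
    using bseq_eq_aseq[of k M] a L unfolding M_def by linarith
  with a show ?thesis
    unfolding idx using beatty_diff_eq_sum_list_take_Cw[OF assms(2,5)] by (simp add: beatty_def D_def)
qed

end
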